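(* Let $\mu>0$, $\alpha>0$, $f(x)=xe^{-x}$, and let $\beta\in L^\infty_+(0,+\infty)$ satisfy $\int_0^{\infty}\beta(a)e^{-\mu a}\,da=1$. Let $a^\star=\sup\{a>0:\int_a^\infty\beta(\sigma)e^{-\mu\sigma}\,d\sigma>0\}\in(0,\infty]$, and let $$\widehat M_0=\Big\{u\in L^1_+(0,\infty):\int_0^{a^\star}u(a)\,da>0\Big\},\qquad \partial\widehat M_0=\Big\{u\in L^1_+(0,\infty):\int_0^{a^\star}u(a)\,da=0\Big\}.$$ For $u_0\in L^1_+(0,\infty)$ let $u(t,\cdot)$ be the solution of $\partial_tu+\partial_au=-\mu u$, $u(t,0)=\alpha f(\int_0^\infty\beta(a)u(t,a)\,da)$, $u(0,\cdot)=u_0$. Then $\widehat M_0$ and $\partial\widehat M_0$ are positively invariant under the semiflow, i.e. $$\int_0^{a^\star}u_0>0\Rightarrow\int_0^{a^\star}u(t,a)\,da>0\ \forall t\ge0,\qquad \int_0^{a^\star}u_0=0\Rightarrow\int_0^{a^\star}u(t,a)\,da=0\ \forall t\ge0.$$ Moreover, if $\int_0^{a^\star}u_0(a)\,da=0$, then $\int_0^\infty\beta(a)u(t,a)\,da=0$ for all $t\ge 0$, the solution is given by $u(t,a)=e^{-\mu t}u_0(a-t)$ if $a\ge t$ and $u(t,a)=0$ if $a\le t$, and hence $\|u(t,\cdot)\|_{L^1}\to 0$ exponentially as $t\to\infty$.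
   Context: Solutions are understood in the integrated sense: $u(t,a)=e^{-\mu t}u_0(a-t)$ if $a\ge t$, $u(t,a)=e^{-\mu a}b(t-a)$ if $a\le t$, where $b$ is the unique continuous solution of $b(t)=\alpha f\big(\int_t^\infty\beta(a)e^{-\mu t}u_0(a-t)\,da+\int_0^t\beta(a)e^{-\mu a}b(t-a)\,da\big)$, $t\ge0$. *)

theory Defs
  imports "HOL-Analysis.Analysis"
begin

definition fnl :: "real \<Rightarrow> real" where
  "fnl x = x * exp (- x)"

definition astar :: "(real \<Rightarrow> real) \<Rightarrow> real \<Rightarrow> ereal" where
  "astar \<beta> \<mu> = Sup (ereal ` {a. 0 < a \<and> (LBINT s:{a<..}. \<beta> s * exp (- \<mu> * s)) > 0})"

definition int_astar :: "(real \<Rightarrow> real) \<Rightarrow> real \<Rightarrow> (real \<Rightarrow> real) \<Rightarrow> real" where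
  "int_astar \<beta> \<mu> v = (LBINT a:{a. 0 < a \<and> ereal a < astar \<beta> \<mu>}. v a)"

text \<open>Integrated solution built from the boundary birth function b.\<close>
definition sol :: "real \<Rightarrow> (real \<Rightarrow> real) \<Rightarrow> (real \<Rightarrow> real) \<Rightarrow> real \<Rightarrow> real \<Rightarrow> real" where
  "sol \<mu> u0 b t a = (if t \<le> a then exp (- \<mu> * t) * u0 (a - t) else exp (- \<mu> * a) * b (t - a))"

end

theory Submission
  imports Defs
begin

text \<open>
  The birth rate b satisfies b = \<alpha> f(B) with B(t) = \<integral>\<beta>(a) u(t,a) da, and f(x) = x exp(-x) has
  the sign of x and vanishes only at 0. A Gronwall argument applied to the negative part of b
  gives b \<ge> 0, and a second one gives b = 0 as soon as the contribution of the initial population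
  to B vanishes. When u0 vanishes on (0, a*) it does, because \<beta> = 0 almost everywhere beyond a*;
  then u is the pure transport of u0, which gives the statements about the boundary.

  Conversely, let u(t) vanish on (0, a*) and 0 < \<delta> \<le> min t a*. The ages below \<delta> at time t
  show that b = 0 on (t - \<delta>, t), so \<beta>(\<sigma> + r) u(t - \<delta>, \<sigma>) = 0 for almost all \<sigma> > 0 and
  r \<in> (0, \<delta>) (Fubini). If \<sigma> + \<delta> < a*, the age \<sigma> is carried into (0, a*) by time t, so
  u(t - \<delta>, \<sigma>) = 0; otherwise u(t - \<delta>, \<sigma>) \<noteq> 0 would force \<beta> = 0 almost everywhere on
  (\<sigma>, \<infinity>), which contradicts \<sigma> < a*. Hence u(t - \<delta>) vanishes on (0, a*) too, and finitely
  many such steps lead back to u0.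
\<close>

lemma gronwall_zero:
  fixes \<phi> :: "real \<Rightarrow> real"
  assumes cont: "continuous_on {0..T} \<phi>" and nonneg: "\<And>s. s \<in> {0..T} \<Longrightarrow> 0 \<le> \<phi> s"
    and K: "0 \<le> K" and le: "\<And>s. s \<in> {0..T} \<Longrightarrow> \<phi> s \<le> K * integral {0..s} \<phi>"
    and t: "t \<in> {0..T}"
  shows "\<phi> t = 0"
proof -
  define \<psi> where "\<psi> = (\<lambda>s. integral {0..s} \<phi>)"
  define g where "g s = exp (- (K * s)) * \<psi> s" for s
  have "(g has_real_derivative exp (- (K * s)) * (\<phi> s - K * \<psi> s)) (at s within {0..t})"
    if "s \<in> {0..t}" for s
  proof -
    have "(\<psi> has_real_derivative \<phi> s) (at s within {0..T})"
      using integral_has_real_derivative[OF cont] that t by (simp add: \<psi>_def)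
    then have "(g has_real_derivative exp (- (K * s)) * (- K) * \<psi> s + exp (- (K * s)) * \<phi> s)
        (at s within {0..T})"
      unfolding g_def by (auto intro!: derivative_eq_intros)
    then show ?thesis
      by (rule DERIV_subset[THEN DERIV_cong]) (use t in \<open>auto simp: algebra_simps\<close>)
  qed
  then obtain x where x: "x \<in> {0..t}" and gx: "g t - g 0 = exp (- (K * x)) * (\<phi> x - K * \<psi> x) * t"
    using mvt_very_simple[of 0 t g] t by (fastforce simp: has_field_derivative_def)
  have "\<phi> x - K * \<psi> x \<le> 0"
    using le[of x] x t by (auto simp: \<psi>_def)
  then have "g t \<le> 0"
    using gx t by (simp add: g_def \<psi>_def mult_nonpos_nonneg mult_nonneg_nonpos)
  then have "\<psi> t \<le> 0"
    by (simp add: g_def mult_le_0_iff)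
  moreover have "0 \<le> \<psi> t"
    unfolding \<psi>_def using t nonneg
    by (intro integral_nonneg integrable_continuous_interval continuous_on_subset[OF cont]) auto
  ultimately show ?thesis
    using le[OF t] nonneg[OF t] by (simp add: \<psi>_def)
qed

lemma set_integral_real_affine:
  fixes f :: "real \<Rightarrow> real"
  assumes "c \<noteq> 0"
  shows "(LBINT x:S. f x) = \<bar>c\<bar> * (LBINT y:{y. t + c * y \<in> S}. f (t + c * y))"
  unfolding set_lebesgue_integral_def
  using lborel_integral_real_affine[OF assms, of "\<lambda>x. indicator S x *\<^sub>R f x" t]
  by (simp add: indicator_def)

lemma set_integrable_real_affine:
  fixes f :: "real \<Rightarrow> real"
  assumes "c \<noteq> 0" "set_integrable lborel S f"
  shows "set_integrable lborel {y. t + c * y \<in> S} (\<lambda>y. f (t + c * y))"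
  using assms lborel_integrable_real_affine[of "\<lambda>x. indicator S x *\<^sub>R f x" c t]
  unfolding set_integrable_def by (simp add: indicator_def)

lemma set_integral_nonneg_AE:
  fixes f :: "'a \<Rightarrow> real"
  assumes "AE x in M. x \<in> S \<longrightarrow> 0 \<le> f x"
  shows "0 \<le> (LINT x:S|M. f x)"
  unfolding set_lebesgue_integral_def
  by (rule integral_nonneg_AE) (use assms in \<open>auto elim!: eventually_mono simp: indicator_def\<close>)

lemma set_integral_eq_zero_AE:
  fixes f :: "'a \<Rightarrow> real"
  assumes "AE x in M. x \<in> S \<longrightarrow> f x = 0"
  shows "(LINT x:S|M. f x) = 0"
  unfolding set_lebesgue_integral_def
  by (rule integral_eq_zero_AE) (use assms in \<open>auto elim!: eventually_mono simp: indicator_def\<close>)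

lemma set_integral_nonneg_eq_0_iff_AE:
  fixes f :: "'a \<Rightarrow> real"
  assumes "set_integrable M S f" "AE x in M. x \<in> S \<longrightarrow> 0 \<le> f x"
  shows "(LINT x:S|M. f x) = 0 \<longleftrightarrow> (AE x in M. x \<in> S \<longrightarrow> f x = 0)"
proof -
  have "(LINT x:S|M. f x) = 0 \<longleftrightarrow> (AE x in M. indicator S x *\<^sub>R f x = 0)"
    using assms unfolding set_lebesgue_integral_def set_integrable_def
    by (intro integral_nonneg_eq_0_iff_AE) (auto elim!: eventually_mono simp: indicator_def)
  also have "\<dots> \<longleftrightarrow> (AE x in M. x \<in> S \<longrightarrow> f x = 0)"
    by (intro AE_cong) (simp add: indicator_def)
  finally show ?thesis .
qed

lemma set_integrable_bounded_mult:
  fixes f g :: "'a \<Rightarrow> real"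
  assumes g: "set_integrable M S g" and f: "f \<in> borel_measurable M" and "S \<in> sets M"
    and bound: "AE x in M. x \<in> S \<longrightarrow> \<bar>f x\<bar> \<le> C"
  shows "set_integrable M S (\<lambda>x. f x * g x)"
  unfolding set_integrable_def
proof (rule Bochner_Integration.integrable_bound)
  show "integrable M (\<lambda>x. C * (indicator S x *\<^sub>R g x))"
    using g unfolding set_integrable_def by auto
  have "(\<lambda>x. indicator S x *\<^sub>R g x) \<in> borel_measurable M"
    using g unfolding set_integrable_def by auto
  then have "(\<lambda>x. f x * (indicator S x *\<^sub>R g x)) \<in> borel_measurable M"
    using f by measurable
  then show "(\<lambda>x. indicator S x *\<^sub>R (f x * g x)) \<in> borel_measurable M"
    by (simp add: indicator_def mult.left_commute)
  show "AE x in M. norm (indicator S x *\<^sub>R (f x * g x)) \<le> norm (C * (indicator S x *\<^sub>R g x))"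
    using bound
  proof eventually_elim
    case (elim x)
    have "\<bar>f x\<bar> * \<bar>g x\<bar> \<le> \<bar>C\<bar> * \<bar>g x\<bar>" if "x \<in> S"
      using elim that by (intro mult_right_mono) auto
    then show ?case by (simp add: indicator_def abs_mult)
  qed
qed

lemma set_integral_reflect_Icc:
  fixes g :: "real \<Rightarrow> real"
  assumes "continuous_on {0..s} g"
  shows "(LBINT a:{0..s}. g (s - a)) = integral {0..s} g"
proof -
  have "(LBINT a:{0..s}. g (s - a)) = (LBINT y:{y. s + (-1) * y \<in> {0..s}}. g (s - (s + (-1) * y)))"
    using set_integral_real_affine[where c="-1" and f="\<lambda>a. g (s - a)" and S="{0..s}" and t=s] by simp
  also have "{y. s + (-1) * y \<in> {0..s}} = {0..s}"
    by auto
  finally show ?thesis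
    using set_borel_integral_eq_integral(2)[OF borel_integrable_atLeastAtMost'[OF assms]] by simp
qed

lemma set_integral_weighted_reflect_ge:
  fixes w g :: "real \<Rightarrow> real"
  assumes g: "continuous_on {0..s} g" and w: "w \<in> borel_measurable lborel"
    and bound: "AE a in lborel. a \<in> {0..s} \<longrightarrow> 0 \<le> w a \<and> w a \<le> C"
  shows "- (C * integral {0..s} (\<lambda>r. max 0 (- g r))) \<le> (LBINT a:{0..s}. w a * g (s - a))"
proof -
  have g_refl: "continuous_on {0..s} (\<lambda>a. g (s - a))"
    by (rule continuous_on_compose2[OF g]) (auto intro!: continuous_intros)
  have "- (C * integral {0..s} (\<lambda>r. max 0 (- g r))) = (LBINT a:{0..s}. - (C * max 0 (- g (s - a))))"
    using set_integral_reflect_Icc[of s "\<lambda>r. max 0 (- g r)"] g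
    by (simp add: set_integral_uminus borel_integrable_atLeastAtMost' continuous_intros g_refl)
  also have "\<dots> \<le> (LBINT a:{0..s}. w a * g (s - a))"
  proof (rule set_integral_mono_AE)
    show "set_integrable lborel {0..s} (\<lambda>a. - (C * max 0 (- g (s - a))))"
      by (intro borel_integrable_atLeastAtMost' continuous_intros g_refl)
    show "set_integrable lborel {0..s} (\<lambda>a. w a * g (s - a))"
      using bound
      by (intro set_integrable_bounded_mult[where C=C] borel_integrable_atLeastAtMost' g_refl w)
         (auto elim!: eventually_mono)
    show "AE a\<in>{0..s} in lborel. - (C * max 0 (- g (s - a))) \<le> w a * g (s - a)"
      using bound
    proof eventually_elim
      case (elim a)
      show ?case
      proof
        assume "a \<in> {0..s}"
        then have "0 \<le> w a" "w a \<le> C" using elim by auto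
        then show "- (C * max 0 (- g (s - a))) \<le> w a * g (s - a)"
          by (cases "g (s - a) \<ge> 0") (auto simp: mult_right_mono_neg)
      qed
    qed
  qed
  finally show ?thesis .
qed

lemma AE_lborel_translate:
  fixes P :: "real \<Rightarrow> bool"
  assumes "Measurable.pred borel P" "AE x in lborel. P x"
  shows "AE x in lborel. P (x + s)"
  using AE_borel_affine[of 1 P s, OF _ assms] by (simp add: add.commute)

lemma borel_measurable_imp_set_borel_measurable:
  fixes f :: "'a \<Rightarrow> real"
  assumes "f \<in> borel_measurable M" "A \<in> sets M"
  shows "set_borel_measurable M A f"
  unfolding set_borel_measurable_def
  using assms by (intro borel_measurable_scaleR borel_measurable_indicator)

locale renewal_solution =
  fixes \<mu> \<alpha> :: real and \<beta> u0 b :: "real \<Rightarrow> real"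
  assumes mu: "\<mu> > 0" and alpha: "\<alpha> > 0"
    and beta_meas: "\<beta> \<in> borel_measurable lborel"
    and beta_nonneg: "\<And>a. a > 0 \<Longrightarrow> \<beta> a \<ge> 0"
    and beta_bdd: "\<exists>C. \<forall>a>0. \<beta> a \<le> C"
    and beta_norm: "(LBINT a:{0<..}. \<beta> a * exp (- \<mu> * a)) = 1"
    and u0_meas: "u0 \<in> borel_measurable lborel"
    and u0_int: "set_integrable lborel {0<..} u0"
    and u0_nonneg: "\<And>a. a > 0 \<Longrightarrow> u0 a \<ge> 0"
    and b_cont: "continuous_on {0..} b"
    and b_eq: "\<And>t. t \<ge> 0 \<Longrightarrow> b t = \<alpha> * fnl
        ((LBINT a:{t<..}. \<beta> a * exp (- \<mu> * t) * u0 (a - t))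
         + (LBINT a:{0..t}. \<beta> a * exp (- \<mu> * a) * b (t - a)))"
begin

abbreviation u :: "real \<Rightarrow> real \<Rightarrow> real" where
  "u t \<equiv> sol \<mu> u0 b t"

lemma beta_measurable [measurable]: "\<beta> \<in> borel_measurable borel"
  using beta_meas by simp

lemma u0_measurable [measurable]: "u0 \<in> borel_measurable borel"
  using u0_meas by simp

definition beta_sup :: real where
  "beta_sup = (SUP a\<in>{0<..}. \<beta> a)"

lemma beta_le_beta_sup: "a > 0 \<Longrightarrow> \<beta> a \<le> beta_sup"
  unfolding beta_sup_def using beta_bdd by (intro cSUP_upper) (auto simp: bdd_above_def)

lemma beta_sup_nonneg: "0 \<le> beta_sup"
  using beta_nonneg[of 1] beta_le_beta_sup[of 1] by simp

lemma weight_bounds: "a > 0 \<Longrightarrow> 0 \<le> \<beta> a * exp (- \<mu> * a) \<and> \<beta> a * exp (- \<mu> * a) \<le> beta_sup"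
proof -
  assume "a > 0"
  moreover have "exp (- \<mu> * a) \<le> 1"
    using mu \<open>a > 0\<close> by simp
  ultimately show ?thesis
    using beta_nonneg[of a] beta_le_beta_sup[of a] mult_left_le[of "exp (- \<mu> * a)" "\<beta> a"] by auto
qed

lemma weight_bounds_AE:
  "AE a in lborel. a \<in> {0..s} \<longrightarrow> 0 \<le> \<beta> a * exp (- \<mu> * a) \<and> \<beta> a * exp (- \<mu> * a) \<le> beta_sup"
  using AE_lborel_singleton[of 0] by eventually_elim (use weight_bounds in force)

definition b_ext :: "real \<Rightarrow> real" where
  "b_ext s = b (max 0 s)"

lemma b_ext_continuous: "continuous_on UNIV b_ext"
  unfolding b_ext_def by (rule continuous_on_compose2[OF b_cont]) (auto intro!: continuous_intros)

lemma b_ext_measurable [measurable]: "b_ext \<in> borel_measurable borel"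
  using b_ext_continuous by (rule borel_measurable_continuous_onI)

lemma sol_b_ext: "u t = sol \<mu> u0 b_ext t"
  by (auto simp: fun_eq_iff sol_def b_ext_def)

lemma u_measurable [measurable]: "u t \<in> borel_measurable borel"
  unfolding sol_b_ext sol_def by measurable

definition initial_part :: "real \<Rightarrow> real" where
  "initial_part s = (LBINT a:{s<..}. \<beta> a * exp (- \<mu> * s) * u0 (a - s))"

definition renewal_part :: "real \<Rightarrow> real" where
  "renewal_part s = (LBINT a:{0..s}. \<beta> a * exp (- \<mu> * a) * b (s - a))"

lemma b_eq_parts: "s \<ge> 0 \<Longrightarrow> b s = \<alpha> * fnl (initial_part s + renewal_part s)"
  unfolding initial_part_def renewal_part_def by (rule b_eq)

lemma initial_part_nonneg: "s \<ge> 0 \<Longrightarrow> 0 \<le> initial_part s"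
  unfolding initial_part_def
  by (rule set_integral_nonneg_AE) (auto intro!: mult_nonneg_nonneg beta_nonneg u0_nonneg)

lemma renewal_part_ge:
  "- (beta_sup * integral {0..s} (\<lambda>r. max 0 (- b r))) \<le> renewal_part s"
  unfolding renewal_part_def
proof (rule set_integral_weighted_reflect_ge[OF _ _ weight_bounds_AE])
  show "continuous_on {0..s} b"
    using b_cont by (rule continuous_on_subset) auto
qed measurable

lemma renewal_part_le:
  "renewal_part s \<le> beta_sup * integral {0..s} (\<lambda>r. max 0 (b r))"
proof -
  have "- (beta_sup * integral {0..s} (\<lambda>r. max 0 (- (- b r))))
      \<le> (LBINT a:{0..s}. \<beta> a * exp (- \<mu> * a) * - b (s - a))"
  proof (rule set_integral_weighted_reflect_ge[OF _ _ weight_bounds_AE])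
    show "continuous_on {0..s} (\<lambda>r. - b r)"
      by (intro continuous_intros continuous_on_subset[OF b_cont]) auto
  qed measurable
  then show ?thesis
    by (simp add: renewal_part_def set_lebesgue_integral_def)
qed

lemma b_nonneg:
  assumes t: "t \<ge> 0"
  shows "0 \<le> b t"
proof -
  define \<phi> where "\<phi> = (\<lambda>r. max 0 (- b r))"
  have cont: "continuous_on {0..t} \<phi>"
    unfolding \<phi>_def by (intro continuous_intros continuous_on_subset[OF b_cont]) auto
  have int_nonneg: "0 \<le> integral {0..s} \<phi>" for s
    unfolding \<phi>_def by (intro integral_nonneg integrable_continuous_interval continuous_intros
        continuous_on_subset[OF b_cont]) auto
  define L where "L = beta_sup * integral {0..t} \<phi>"
  have "\<phi> s \<le> (\<alpha> * exp L * beta_sup) * integral {0..s} \<phi>" if s: "s \<in> {0..t}" for s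
  proof (cases "b s \<ge> 0")
    case True
    then show ?thesis
      using alpha beta_sup_nonneg int_nonneg by (simp add: \<phi>_def)
  next
    case False
    define X where "X = initial_part s + renewal_part s"
    have bX: "b s = \<alpha> * (X * exp (- X))"
      using b_eq_parts s by (simp add: X_def fnl_def)
    then have "X < 0"
      using False alpha by (auto simp: zero_le_mult_iff)
    have "- X \<le> beta_sup * integral {0..s} \<phi>"
      using renewal_part_ge[of s] initial_part_nonneg[of s] s by (simp add: X_def \<phi>_def)
    moreover have "integral {0..s} \<phi> \<le> integral {0..t} \<phi>"
      using s
      by (intro integral_subset_le integrable_continuous_interval continuous_on_subset[OF cont])
         (auto simp: \<phi>_def)
    ultimately have "- X \<le> L"
      unfolding L_def using mult_left_mono[OF _ beta_sup_nonneg] by (meson order_trans)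
    have "\<phi> s = \<alpha> * (- X) * exp (- X)"
      using bX False by (simp add: \<phi>_def)
    also have "\<dots> \<le> \<alpha> * (beta_sup * integral {0..s} \<phi>) * exp L"
      using \<open>X < 0\<close> \<open>- X \<le> L\<close> \<open>- X \<le> beta_sup * integral {0..s} \<phi>\<close> alpha
      by (intro mult_mono) auto
    finally show ?thesis
      by (simp add: algebra_simps)
  qed
  then have "\<phi> t = 0"
    using alpha beta_sup_nonneg t
    by (intro gronwall_zero[OF cont, where K="\<alpha> * exp L * beta_sup"]) (auto simp: \<phi>_def)
  then show ?thesis
    by (simp add: \<phi>_def)
qed

lemma b_eq_0_if_initial_part_eq_0:
  assumes initial: "\<And>s. s \<ge> 0 \<Longrightarrow> initial_part s = 0" and t: "t \<ge> 0"
  shows "b t = 0"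
proof -
  have cont: "continuous_on {0..t} b"
    using b_cont by (rule continuous_on_subset) auto
  have "b s \<le> (\<alpha> * beta_sup) * integral {0..s} b" if s: "s \<in> {0..t}" for s
  proof -
    have "integral {0..s} (\<lambda>r. max 0 (b r)) = integral {0..s} b"
      using b_nonneg s by (intro integral_cong) auto
    moreover have "integral {0..s} (\<lambda>r. max 0 (- b r)) = integral {0..s} (\<lambda>_. 0)"
      using b_nonneg s by (intro integral_cong) auto
    ultimately have "renewal_part s \<le> beta_sup * integral {0..s} b" "0 \<le> renewal_part s"
      using renewal_part_le[of s] renewal_part_ge[of s] s by auto
    have "b s = \<alpha> * (renewal_part s * exp (- renewal_part s))"
      using b_eq_parts[of s] initial[of s] s by (simp add: fnl_def)
    also have "\<dots> \<le> \<alpha> * renewal_part s"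
      using alpha \<open>0 \<le> renewal_part s\<close> by (simp add: mult_left_le)
    also have "\<dots> \<le> \<alpha> * beta_sup * integral {0..s} b"
      using alpha \<open>renewal_part s \<le> beta_sup * integral {0..s} b\<close> by (simp add: mult.assoc)
    finally show ?thesis .
  qed
  then show ?thesis
    using alpha beta_sup_nonneg t b_nonneg
    by (intro gronwall_zero[OF cont, where K="\<alpha> * beta_sup"]) auto
qed

lemma weight_integrable: "set_integrable lborel {0<..} (\<lambda>a. \<beta> a * exp (- \<mu> * a))"
proof (rule ccontr)
  assume "\<not> ?thesis"
  then have "(LBINT a:{0<..}. \<beta> a * exp (- \<mu> * a)) = 0"
    unfolding set_lebesgue_integral_def set_integrable_def by (rule not_integrable_integral_eq)
  with beta_norm show False
    by simp
qed

definition beta_tail :: "real \<Rightarrow> real" where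
  "beta_tail a = (LBINT s:{a<..}. \<beta> s * exp (- \<mu> * s))"

lemma beta_tail_pos:
  assumes "0 < a" "ereal a < astar \<beta> \<mu>"
  shows "0 < beta_tail a"
proof -
  obtain a' where a': "0 < a'" "0 < beta_tail a'" "a < a'"
    using assms unfolding astar_def less_Sup_iff by (auto simp: beta_tail_def)
  have "beta_tail a' \<le> beta_tail a"
    unfolding beta_tail_def set_lebesgue_integral_def
  proof (rule integral_mono)
    show "integrable lborel (\<lambda>x. indicator {a'<..} x *\<^sub>R (\<beta> x * exp (- \<mu> * x)))"
         "integrable lborel (\<lambda>x. indicator {a<..} x *\<^sub>R (\<beta> x * exp (- \<mu> * x)))"
      using set_integrable_subset[OF weight_integrable] assms a'
      unfolding set_integrable_def by auto
    show "indicator {a'<..} x *\<^sub>R (\<beta> x * exp (- \<mu> * x))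
        \<le> indicator {a<..} x *\<^sub>R (\<beta> x * exp (- \<mu> * x))" for x
      using assms a' beta_nonneg[of x] by (auto simp: indicator_def)
  qed
  with a' show ?thesis
    by simp
qed

lemma beta_AE_zero_above:
  assumes q: "0 < q" "astar \<beta> \<mu> < ereal q"
  shows "AE a in lborel. q < a \<longrightarrow> \<beta> a = 0"
proof -
  have "\<not> 0 < beta_tail q"
  proof
    assume "0 < beta_tail q"
    then have "ereal q \<le> astar \<beta> \<mu>"
      unfolding astar_def beta_tail_def using q by (intro Sup_upper) auto
    with q show False
      by simp
  qed
  moreover have "0 \<le> beta_tail q"
    unfolding beta_tail_def using q beta_nonneg by (intro set_integral_nonneg_AE) auto
  ultimately have "(LBINT s:{q<..}. \<beta> s * exp (- \<mu> * s)) = 0"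
    by (simp add: beta_tail_def)
  moreover have "set_integrable lborel {q<..} (\<lambda>s. \<beta> s * exp (- \<mu> * s))"
    using q by (intro set_integrable_subset[OF weight_integrable]) auto
  ultimately have "AE a in lborel. a \<in> {q<..} \<longrightarrow> \<beta> a * exp (- \<mu> * a) = 0"
    using q beta_nonneg by (subst (asm) set_integral_nonneg_eq_0_iff_AE) auto
  then show ?thesis
    by (auto elim!: eventually_mono)
qed

lemma beta_AE_zero_beyond_astar: "AE a in lborel. 0 < a \<and> astar \<beta> \<mu> \<le> ereal a \<longrightarrow> \<beta> a = 0"
proof (cases "astar \<beta> \<mu> = \<infinity>")
  case True
  then show ?thesis
    by simp
next
  case False
  obtain c where c: "0 \<le> c" "astar \<beta> \<mu> \<le> ereal c"
    and c_le: "\<And>a. 0 < a \<Longrightarrow> astar \<beta> \<mu> \<le> ereal a \<Longrightarrow> c \<le> a"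
  proof (cases "astar \<beta> \<mu>")
    case (real r)
    then show ?thesis
      by (intro that[of "max 0 r"]) auto
  qed (use False that[of 0] in auto)
  have "AE a in lborel. \<forall>n. c + inverse (Suc n) < a \<longrightarrow> \<beta> a = 0"
    unfolding AE_all_countable
  proof
    fix n :: nat
    have "ereal c < ereal (c + inverse (Suc n))"
      by simp
    with c show "AE a in lborel. c + inverse (Suc n) < a \<longrightarrow> \<beta> a = 0"
      by (intro beta_AE_zero_above add_nonneg_pos le_less_trans[OF c(2)]) auto
  qed
  with AE_lborel_singleton[of c] show ?thesis
  proof eventually_elim
    case (elim a)
    show ?case
    proof
      assume a: "0 < a \<and> astar \<beta> \<mu> \<le> ereal a"
      then have "c \<le> a"
        using c_le by blast
      with elim obtain n where "inverse (Suc n) < a - c"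
        using reals_Archimedean[of "a - c"] by force
      with elim show "\<beta> a = 0"
        by (metis add.commute less_diff_eq)
    qed
  qed
qed

definition pre_astar :: "real set" where
  "pre_astar = {a. 0 < a \<and> ereal a < astar \<beta> \<mu>}"

lemma pre_astar_measurable [measurable]: "pre_astar \<in> sets borel"
  unfolding pre_astar_def by measurable

lemma int_astar_eq: "int_astar \<beta> \<mu> v = (LBINT a:pre_astar. v a)"
  by (simp add: int_astar_def pre_astar_def)

definition vanishes_below_astar :: "(real \<Rightarrow> real) \<Rightarrow> bool" where
  "vanishes_below_astar v \<longleftrightarrow> (AE a in lborel. a \<in> pre_astar \<longrightarrow> v a = 0)"

lemma int_astar_pos_iff:
  assumes "set_integrable lborel {0<..} v" "AE a in lborel. 0 < a \<longrightarrow> 0 \<le> v a"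
  shows "0 < int_astar \<beta> \<mu> v \<longleftrightarrow> \<not> vanishes_below_astar v"
proof -
  have "set_integrable lborel pre_astar v"
    using assms(1) by (rule set_integrable_subset) (auto simp: pre_astar_def)
  moreover have nonneg: "AE a in lborel. a \<in> pre_astar \<longrightarrow> 0 \<le> v a"
    using assms(2) by (auto simp: pre_astar_def elim!: eventually_mono)
  ultimately show ?thesis
    using set_integral_nonneg_AE[OF nonneg]
    by (auto simp: int_astar_eq vanishes_below_astar_def set_integral_nonneg_eq_0_iff_AE[symmetric])
qed

lemma int_astar_eq_0_if_vanishes: "vanishes_below_astar v \<Longrightarrow> int_astar \<beta> \<mu> v = 0"
  unfolding int_astar_eq vanishes_below_astar_def by (rule set_integral_eq_zero_AE)

lemma u_shift: "u (t + r) (\<sigma> + r) = exp (- \<mu> * r) * u t \<sigma>"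
  by (simp add: sol_def exp_add[symmetric] algebra_simps)

lemma u_nonneg_AE: "0 \<le> t \<Longrightarrow> AE a in lborel. 0 < a \<longrightarrow> 0 \<le> u t a"
  using AE_lborel_singleton[of t] by eventually_elim (auto simp: sol_def intro!: mult_nonneg_nonneg b_nonneg u0_nonneg)

lemma u0_shift_integrable: "set_integrable lborel {t<..} (\<lambda>a. u0 (a - t))"
proof -
  have "set_integrable lborel {y. - t + 1 * y \<in> {0<..}} (\<lambda>y. u0 (- t + 1 * y))"
    by (rule set_integrable_real_affine[OF _ u0_int]) simp
  moreover have "{y. - t + 1 * y \<in> {0<..}} = {t<..}"
    by auto
  ultimately show ?thesis
    by simp
qed

lemma u_integrable:
  assumes t: "0 \<le> t"
  shows "set_integrable lborel {0<..} (u t)"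
proof -
  define g where "g a = indicator {0..t} a *\<^sub>R (exp (- \<mu> * a) * b_ext (t - a))
     + indicator {t<..} a *\<^sub>R (exp (- \<mu> * t) * u0 (a - t))" for a
  have "continuous_on {0..t} (\<lambda>a. exp (- \<mu> * a) * b_ext (t - a))"
    by (intro continuous_intros continuous_on_compose2[OF b_ext_continuous]) auto
  then have "set_integrable lborel {0..t} (\<lambda>a. exp (- \<mu> * a) * b_ext (t - a))"
    by (rule borel_integrable_atLeastAtMost')
  moreover have "set_integrable lborel {t<..} (\<lambda>a. exp (- \<mu> * t) * u0 (a - t))"
    using u0_shift_integrable by (rule set_integrable_mult_right)
  ultimately have "integrable lborel g"
    unfolding g_def set_integrable_def by auto
  then show ?thesis
    unfolding set_integrable_def
  proof (rule integrable_cong_AE_imp)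
    show "AE a in lborel. g a = indicator {0<..} a *\<^sub>R u t a"
      using AE_lborel_singleton[of t] AE_lborel_singleton[of 0]
      by eventually_elim (use t in \<open>auto simp: g_def sol_def b_ext_def indicator_def\<close>)
  qed measurable
qed

lemma beta_u_integrable: "0 \<le> t \<Longrightarrow> set_integrable lborel {0<..} (\<lambda>a. \<beta> a * u t a)"
  by (rule set_integrable_bounded_mult[OF u_integrable, where C=beta_sup])
     (auto intro!: AE_I2 simp: beta_nonneg beta_le_beta_sup)

lemma birth_integral_eq_parts:
  assumes s: "0 \<le> s"
  shows "(LBINT a:{0<..}. \<beta> a * u s a) = initial_part s + renewal_part s"
proof -
  have "(LBINT a:{0<..}. \<beta> a * u s a) = (LBINT a:{0<..<s} \<union> {s<..}. \<beta> a * u s a)"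
  proof (rule set_integral_cong_set[symmetric])
    show "AE a in lborel. (a \<in> {0<..}) = (a \<in> {0<..<s} \<union> {s<..})"
      using AE_lborel_singleton[of s] by eventually_elim (use s in auto)
  qed (auto intro!: borel_measurable_imp_set_borel_measurable)
  also have "\<dots> = (LBINT a:{0<..<s}. \<beta> a * u s a) + (LBINT a:{s<..}. \<beta> a * u s a)"
    using s by (intro set_integral_Un set_integrable_subset[OF beta_u_integrable]) auto
  also have "(LBINT a:{s<..}. \<beta> a * u s a) = initial_part s"
    unfolding initial_part_def by (rule set_lebesgue_integral_cong) (auto simp: sol_def)
  also have "(LBINT a:{0<..<s}. \<beta> a * u s a) = renewal_part s"
  proof -
    have "(LBINT a:{0<..<s}. \<beta> a * u s a) = (LBINT a:{0<..<s}. \<beta> a * exp (- \<mu> * a) * b_ext (s - a))"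
      by (rule set_lebesgue_integral_cong) (auto simp: sol_def b_ext_def)
    also have "\<dots> = (LBINT a:{0..s}. \<beta> a * exp (- \<mu> * a) * b_ext (s - a))"
    proof (rule set_integral_cong_set)
      show "AE a in lborel. (a \<in> {0..s}) = (a \<in> {0<..<s})"
        using AE_lborel_singleton[of s] AE_lborel_singleton[of 0] by eventually_elim auto
    qed (auto intro!: borel_measurable_imp_set_borel_measurable)
    also have "\<dots> = renewal_part s"
      unfolding renewal_part_def by (rule set_lebesgue_integral_cong) (auto simp: b_ext_def)
    finally show ?thesis .
  qed
  finally show ?thesis
    by simp
qed

lemma b_eq_0_iff: "0 \<le> s \<Longrightarrow> b s = 0 \<longleftrightarrow> (LBINT a:{0<..}. \<beta> a * u s a) = 0"
  using alpha by (simp add: b_eq_parts birth_integral_eq_parts fnl_def)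

context
  assumes boundary: "int_astar \<beta> \<mu> u0 = 0"
begin

lemma u0_vanishes_below_astar: "vanishes_below_astar u0"
  using boundary int_astar_pos_iff[OF u0_int] u0_nonneg by auto

lemma initial_part_eq_0:
  assumes s: "0 \<le> s"
  shows "initial_part s = 0"
proof -
  have "AE a in lborel. a + - s \<in> pre_astar \<longrightarrow> u0 (a + - s) = 0"
    using u0_vanishes_below_astar unfolding vanishes_below_astar_def
    by (rule AE_lborel_translate[rotated]) measurable
  with beta_AE_zero_beyond_astar
  have "AE a in lborel. a \<in> {s<..} \<longrightarrow> \<beta> a * exp (- \<mu> * s) * u0 (a - s) = 0"
  proof eventually_elim
    case (elim a)
    show ?case
    proof
      assume a: "a \<in> {s<..}"
      show "\<beta> a * exp (- \<mu> * s) * u0 (a - s) = 0"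
      proof (cases "ereal (a - s) < astar \<beta> \<mu>")
        case True
        with a elim show ?thesis
          by (simp add: pre_astar_def)
      next
        case False
        then have "astar \<beta> \<mu> \<le> ereal a"
          using s by (simp add: not_less order_trans)
        with a elim s show ?thesis
          by simp
      qed
    qed
  qed
  then show ?thesis
    unfolding initial_part_def by (rule set_integral_eq_zero_AE)
qed

lemma b_eq_0: "0 \<le> s \<Longrightarrow> b s = 0"
  by (rule b_eq_0_if_initial_part_eq_0[OF initial_part_eq_0])

lemma u_eq_transport: "u t a = (if t \<le> a then exp (- \<mu> * t) * u0 (a - t) else 0)"
  using b_eq_0[of "t - a"] by (auto simp: sol_def)

lemma u_vanishes_below_astar:
  assumes t: "0 \<le> t"
  shows "vanishes_below_astar (u t)"
proof -
  have "AE a in lborel. a + - t \<in> pre_astar \<longrightarrow> u0 (a + - t) = 0"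
    using u0_vanishes_below_astar unfolding vanishes_below_astar_def
    by (rule AE_lborel_translate[rotated]) measurable
  with AE_lborel_singleton[of t] show ?thesis
    unfolding vanishes_below_astar_def
  proof eventually_elim
    case (elim a)
    show ?case
    proof
      assume a: "a \<in> pre_astar"
      show "u t a = 0"
      proof (cases "t < a")
        case True
        have "ereal (a - t) \<le> ereal a"
          using t by simp
        also have "ereal a < astar \<beta> \<mu>"
          using a by (simp add: pre_astar_def)
        finally have "a - t \<in> pre_astar"
          using True by (simp add: pre_astar_def)
        with elim True show ?thesis
          by (simp add: u_eq_transport)
      next
        case False
        with elim show ?thesis
          by (simp add: u_eq_transport)
      qed
    qed
  qed
qed

lemma int_astar_u_eq_0: "0 \<le> t \<Longrightarrow> int_astar \<beta> \<mu> (u t) = 0"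
  by (rule int_astar_eq_0_if_vanishes[OF u_vanishes_below_astar])

lemma birth_integral_eq_0: "0 \<le> t \<Longrightarrow> (LBINT a:{0<..}. \<beta> a * u t a) = 0"
  using b_eq_0 b_eq_0_iff by blast

lemma L1_norm_u:
  assumes t: "0 \<le> t"
  shows "(LBINT a:{0<..}. \<bar>u t a\<bar>) = (LBINT a:{0<..}. \<bar>u0 a\<bar>) * exp (- \<mu> * t)"
proof -
  have "(LBINT a:{0<..}. \<bar>u t a\<bar>) = (LBINT a:{0<..}. indicator {t<..} a * (exp (- \<mu> * t) * \<bar>u0 (a - t)\<bar>))"
  proof (rule set_lebesgue_integral_cong_AE)
    show "AE a\<in>{0<..} in lborel. \<bar>u t a\<bar> = indicator {t<..} a * (exp (- \<mu> * t) * \<bar>u0 (a - t)\<bar>)"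
      using AE_lborel_singleton[of t] by eventually_elim (auto simp: u_eq_transport abs_mult)
  qed measurable
  also have "\<dots> = (LBINT a:{t<..}. exp (- \<mu> * t) * \<bar>u0 (a - t)\<bar>)"
    unfolding set_lebesgue_integral_def
    by (rule Bochner_Integration.integral_cong) (use t in \<open>auto simp: indicator_def\<close>)
  also have "(LBINT a:{t<..}. \<bar>u0 (a - t)\<bar>) = (LBINT a:{0<..}. \<bar>u0 a\<bar>)"
    using set_integral_real_affine[where c=1 and f="\<lambda>a. \<bar>u0 a\<bar>" and S="{0<..}" and t="- t"]
    by (simp add: greaterThan_def)
  ultimately show ?thesis
    by simp
qed

end

lemma beta_u_AE_zero_if_b_eq_0:
  assumes s: "0 \<le> s" and "b s = 0"
  shows "AE a in lborel. 0 < a \<longrightarrow> \<beta> a * u s a = 0"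
proof -
  have "AE a in lborel. a \<in> {0<..} \<longrightarrow> 0 \<le> \<beta> a * u s a"
    using u_nonneg_AE[OF s] by eventually_elim (auto simp: beta_nonneg)
  with assms show ?thesis
    using set_integral_nonneg_eq_0_iff_AE[OF beta_u_integrable[OF s]] b_eq_0_iff by auto
qed

lemma b_AE_zero_if_vanishes:
  assumes van: "vanishes_below_astar (u t)" and "0 < \<delta>" "\<delta> \<le> t" "ereal \<delta> \<le> astar \<beta> \<mu>"
  shows "AE s in lborel. t - \<delta> < s \<and> s < t \<longrightarrow> b s = 0"
proof -
  have "AE s in lborel. t + (-1) * s \<in> pre_astar \<longrightarrow> u t (t + (-1) * s) = 0"
    using van unfolding vanishes_below_astar_def by (rule AE_borel_affine[rotated 2]) auto
  then show ?thesis
  proof eventually_elim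
    case (elim s)
    show ?case
    proof
      assume s: "t - \<delta> < s \<and> s < t"
      then have "ereal (t - s) < ereal \<delta>"
        by simp
      also have "\<dots> \<le> astar \<beta> \<mu>"
        by (fact assms(4))
      finally have "ereal (t - s) < astar \<beta> \<mu>" .
      with s elim assms(3) show "b s = 0"
        by (simp add: pre_astar_def sol_def)
    qed
  qed
qed

lemma beta_shift_u_AE_zero:
  assumes t': "0 \<le> t'" and b_zero: "AE s in lborel. t' < s \<and> s < t \<longrightarrow> b s = 0"
  shows "AE \<sigma> in lborel. AE s in lborel. t' < s \<and> s < t \<and> 0 < \<sigma> \<longrightarrow> \<beta> (\<sigma> + (s - t')) * u t' \<sigma> = 0"
proof -
  have swapped: "AE s in lborel. AE \<sigma> in lborel. t' < s \<and> s < t \<and> 0 < \<sigma> \<longrightarrow> \<beta> (\<sigma> + (s - t')) * u t' \<sigma> = 0"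
    using b_zero
  proof eventually_elim
    case (elim s)
    show ?case
    proof (cases "t' < s \<and> s < t")
      case True
      have "AE a in lborel. 0 < a \<longrightarrow> \<beta> a * u s a = 0"
        using True elim t' by (intro beta_u_AE_zero_if_b_eq_0) auto
      then have "AE \<sigma> in lborel. 0 < \<sigma> + (s - t') \<longrightarrow> \<beta> (\<sigma> + (s - t')) * u s (\<sigma> + (s - t')) = 0"
        by (rule AE_lborel_translate[rotated]) measurable
      then show ?thesis
        by eventually_elim (use True u_shift[of t' "s - t'"] in auto)
    qed (auto intro!: AE_I2)
  qed
  show ?thesis
  proof (subst lborel_pair.AE_commute)
    show "{x \<in> space (lborel \<Otimes>\<^sub>M lborel). t' < snd x \<and> snd x < t \<and> 0 < fst x
        \<longrightarrow> \<beta> (fst x + (snd x - t')) * u t' (fst x) = 0} \<in> sets (lborel \<Otimes>\<^sub>M lborel)"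
      by measurable
  qed (fact swapped)
qed

lemma beta_not_AE_zero_near_astar:
  assumes \<sigma>: "\<sigma> \<in> pre_astar" and "astar \<beta> \<mu> \<le> ereal (\<sigma> + \<delta>)"
  shows "\<not> (AE a in lborel. \<sigma> < a \<and> a < \<sigma> + \<delta> \<longrightarrow> \<beta> a = 0)"
proof
  assume "AE a in lborel. \<sigma> < a \<and> a < \<sigma> + \<delta> \<longrightarrow> \<beta> a = 0"
  with beta_AE_zero_beyond_astar
  have "AE a in lborel. a \<in> {\<sigma><..} \<longrightarrow> \<beta> a * exp (- \<mu> * a) = 0"
  proof eventually_elim
    case (elim a)
    show ?case
    proof
      assume a: "a \<in> {\<sigma><..}"
      show "\<beta> a * exp (- \<mu> * a) = 0"
      proof (cases "a < \<sigma> + \<delta>")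
        case False
        then have "astar \<beta> \<mu> \<le> ereal a"
          using assms(2) by (simp add: not_less order_trans)
        with a elim \<sigma> show ?thesis
          by (simp add: pre_astar_def)
      qed (use a elim in simp)
    qed
  qed
  then have "beta_tail \<sigma> = 0"
    unfolding beta_tail_def by (rule set_integral_eq_zero_AE)
  with beta_tail_pos[of \<sigma>] \<sigma> show False
    by (simp add: pre_astar_def)
qed

lemma vanishes_below_astar_backward:
  assumes van: "vanishes_below_astar (u t)" and \<delta>: "0 < \<delta>" "\<delta> \<le> t" "ereal \<delta> \<le> astar \<beta> \<mu>"
  shows "vanishes_below_astar (u (t - \<delta>))"
proof -
  define t' where "t' = t - \<delta>"
  have t': "0 \<le> t'" "t = t' + \<delta>"
    using \<delta> by (auto simp: t'_def)
  have "AE \<sigma> in lborel. \<sigma> + \<delta> \<in> pre_astar \<longrightarrow> u t (\<sigma> + \<delta>) = 0"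
    using van unfolding vanishes_below_astar_def by (rule AE_lborel_translate[rotated]) measurable
  then have young: "AE \<sigma> in lborel. \<sigma> \<in> pre_astar \<and> ereal (\<sigma> + \<delta>) < astar \<beta> \<mu> \<longrightarrow> u t' \<sigma> = 0"
    by eventually_elim (use \<delta> u_shift[of t' \<delta>] in \<open>auto simp: t' pre_astar_def\<close>)
  have b_zero: "AE s in lborel. t' < s \<and> s < t \<longrightarrow> b s = 0"
    using b_AE_zero_if_vanishes[OF van \<delta>] by (simp add: t'_def)
  have old: "AE \<sigma> in lborel. \<sigma> \<in> pre_astar \<and> astar \<beta> \<mu> \<le> ereal (\<sigma> + \<delta>) \<longrightarrow> u t' \<sigma> = 0"
    using beta_shift_u_AE_zero[OF t'(1) b_zero]
  proof eventually_elim
    case (elim \<sigma>)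
    show ?case
    proof (rule impI, elim conjE, rule ccontr)
      assume \<sigma>: "\<sigma> \<in> pre_astar" "astar \<beta> \<mu> \<le> ereal (\<sigma> + \<delta>)" and nonzero: "u t' \<sigma> \<noteq> 0"
      have "AE s in lborel. t' < s \<and> s < t \<longrightarrow> \<beta> (\<sigma> + (s - t')) = 0"
        using elim by eventually_elim (use \<sigma> nonzero in \<open>auto simp: pre_astar_def\<close>)
      then have "AE a in lborel. t' < a + (t' - \<sigma>) \<and> a + (t' - \<sigma>) < t \<longrightarrow> \<beta> (\<sigma> + (a + (t' - \<sigma>) - t')) = 0"
        by (rule AE_lborel_translate[rotated]) measurable
      then have "AE a in lborel. \<sigma> < a \<and> a < \<sigma> + \<delta> \<longrightarrow> \<beta> a = 0"
        by eventually_elim (auto simp: t')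
      with beta_not_AE_zero_near_astar[OF \<sigma>(1,2)] show False
        by contradiction
    qed
  qed
  from young old show ?thesis
    unfolding vanishes_below_astar_def t'_def[symmetric] by eventually_elim (auto simp: not_less)
qed

lemma u_not_vanishes_upto:
  assumes u_0: "\<not> vanishes_below_astar (u 0)" and \<delta>0: "0 < \<delta>0" "ereal \<delta>0 \<le> astar \<beta> \<mu>"
  shows "0 \<le> t \<Longrightarrow> t \<le> real n * \<delta>0 \<Longrightarrow> \<not> vanishes_below_astar (u t)"
proof (induction n arbitrary: t)
  case 0
  with u_0 show ?case
    by simp
next
  case (Suc n)
  show ?case
  proof (cases "t = 0")
    case False
    define \<delta> where "\<delta> = min t \<delta>0"
    have \<delta>: "0 < \<delta>" "\<delta> \<le> t" "ereal \<delta> \<le> astar \<beta> \<mu>"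
      using Suc.prems False \<delta>0 by (auto simp: \<delta>_def min_def intro: order_trans[OF _ \<delta>0(2)])
    have "0 \<le> t - \<delta>" "t - \<delta> \<le> real n * \<delta>0"
      using Suc.prems \<delta>0 by (auto simp: \<delta>_def min_def algebra_simps)
    with Suc.IH vanishes_below_astar_backward[OF _ \<delta>] show ?thesis
      by blast
  qed (use u_0 in simp)
qed

lemma int_astar_u_pos:
  assumes pos: "0 < int_astar \<beta> \<mu> u0" and t: "0 \<le> t"
  shows "0 < int_astar \<beta> \<mu> (u t)"
proof -
  have "\<not> vanishes_below_astar u0"
    using pos u0_nonneg by (simp add: int_astar_pos_iff[OF u0_int])
  then have u_0: "\<not> vanishes_below_astar (u 0)"
    unfolding vanishes_below_astar_def by (auto simp: sol_def pre_astar_def elim: eventually_mono)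
  then obtain \<delta>0 where \<delta>0: "0 < \<delta>0" "ereal \<delta>0 \<le> astar \<beta> \<mu>"
    unfolding vanishes_below_astar_def pre_astar_def by (auto intro: less_imp_le)
  obtain n :: nat where "t / \<delta>0 \<le> real n"
    using real_arch_simple by blast
  then have "t \<le> real n * \<delta>0"
    using \<delta>0 by (simp add: field_simps)
  with u_not_vanishes_upto[OF u_0 \<delta>0 t] show ?thesis
    using t by (simp add: int_astar_pos_iff[OF u_integrable u_nonneg_AE])
qed

end

theorem theorem3p5:
  fixes \<mu> \<alpha> :: real and \<beta> u0 b :: "real \<Rightarrow> real"
  assumes mu: "\<mu> > 0" and alpha: "\<alpha> > 0"
    and beta_meas: "\<beta> \<in> borel_measurable lborel"
    and beta_nonneg: "\<And>a. a > 0 \<Longrightarrow> \<beta> a \<ge> 0"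
    and beta_bdd: "\<exists>C. \<forall>a>0. \<beta> a \<le> C"
    and beta_norm: "(LBINT a:{0<..}. \<beta> a * exp (- \<mu> * a)) = 1"
    and u0_meas: "u0 \<in> borel_measurable lborel"
    and u0_int: "set_integrable lborel {0<..} u0"
    and u0_nonneg: "\<And>a. a > 0 \<Longrightarrow> u0 a \<ge> 0"
    and b_cont: "continuous_on {0..} b"
    and b_eq: "\<And>t. t \<ge> 0 \<Longrightarrow> b t = \<alpha> * fnl
        ((LBINT a:{t<..}. \<beta> a * exp (- \<mu> * t) * u0 (a - t))
         + (LBINT a:{0..t}. \<beta> a * exp (- \<mu> * a) * b (t - a)))"
  shows "(int_astar \<beta> \<mu> u0 > 0 \<longrightarrow>
            (\<forall>t\<ge>0. int_astar \<beta> \<mu> (sol \<mu> u0 b t) > 0))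
       \<and> (int_astar \<beta> \<mu> u0 = 0 \<longrightarrow>
            (\<forall>t\<ge>0. int_astar \<beta> \<mu> (sol \<mu> u0 b t) = 0)
          \<and> (\<forall>t\<ge>0. (LBINT a:{0<..}. \<beta> a * sol \<mu> u0 b t a) = 0)
          \<and> (\<forall>t\<ge>0. \<forall>a>0. sol \<mu> u0 b t a =
                (if a \<ge> t then exp (- \<mu> * t) * u0 (a - t) else 0))
          \<and> (\<exists>C \<delta>. \<delta> > 0 \<and> (\<forall>t\<ge>0.
                (LBINT a:{0<..}. \<bar>sol \<mu> u0 b t a\<bar>) \<le> C * exp (- \<delta> * t))))"
proof -
  interpret renewal_solution \<mu> \<alpha> \<beta> u0 b
    using assms by unfold_locales
  show ?thesis
  proof (intro conjI impI allI)
    show "0 < int_astar \<beta> \<mu> (u t)" if "0 < int_astar \<beta> \<mu> u0" "0 \<le> t" for t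
      using that by (rule int_astar_u_pos)
    show "int_astar \<beta> \<mu> (u t) = 0" if "int_astar \<beta> \<mu> u0 = 0" "0 \<le> t" for t
      using that by (rule int_astar_u_eq_0)
    show "(LBINT a:{0<..}. \<beta> a * u t a) = 0" if "int_astar \<beta> \<mu> u0 = 0" "0 \<le> t" for t
      using that by (rule birth_integral_eq_0)
    show "u t a = (if a \<ge> t then exp (- \<mu> * t) * u0 (a - t) else 0)" if "int_astar \<beta> \<mu> u0 = 0" for t a
      using that by (rule u_eq_transport)
    show "\<exists>C \<delta>. \<delta> > 0 \<and> (\<forall>t\<ge>0. (LBINT a:{0<..}. \<bar>u t a\<bar>) \<le> C * exp (- \<delta> * t))"
      if "int_astar \<beta> \<mu> u0 = 0"
      using mu L1_norm_u[OF that] by (intro exI[of _ "LBINT a:{0<..}. \<bar>u0 a\<bar>"] exI[of _ \<mu>]) auto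
  qed
qed

end
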